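(* Let $n\ge1$ and let $\mathcal{C}$ be the binary $[2^n-1,n]$ simplex code. Then for every integer $s$ with $1\le s\le n-\ln n$, $\mathcal{C}$ is a functional $(s,\,2^{n-1}-\lceil s/2\rceil\cdot2^{s-1})$-batch code. Moreover, $\mathcal{C}$ can serve every multiset of request vectors $\{\mathbf{v}_1^{(a_1)},\dots,\mathbf{v}_s^{(a_s)}\}$ with $a_i\ge1$, $\sum_{i=1}^s a_i=t$, $\dim\operatorname{Span}\{\mathbf{v}_1,\dots,\mathbf{v}_s\}=s'$ and $t\le 2^{n-1}-\lceil s/2\rceil\cdot2^{s'-1}$ (in the sense that the required $t$ pairwise disjoint recovering sets exist).
   Context: The binary $[2^n-1,n]$ simplex code is the binary linear code whose $n\times(2^n-1)$ generator matrix $\mathbf{G}=[\mathbf{g}_1,\dots,\mathbf{g}_{2^n-1}]$ has as columns all nonzero vectors of $\mathbb{F}_2^n$ (each exactly once). A binary linear code with generator matrix $\mathbf{G}=[\mathbf{g}_1,\dots,\mathbf{g}_N]\in\mathbb{F}_2^{n\times N}$ with nonzero columns is a functional $(s,t)$-batch code ($1\le s\le t$) if for every multiset of request vectors $I=\{\mathbf{v}_1^{(a_1)},\dots,\mathbf{v}_s^{(a_s)}\}$, i.e. nonzero vectors $\mathbf{v}_1,\dots,\mathbf{v}_s\in\mathbb{F}_2^n$ (not necessarily distinct) with multiplicities $a_i\ge1$ and $\sum_i a_i=t$, there exist $t$ pairwise disjoint sets $R_{i,j}\subseteq[N]$ ($i\in[s]$, $j\in[a_i]$) with $\sum_{l\in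 R_{i,j}}\mathbf{g}_l=\mathbf{v}_i$ for all $i,j$. Here $\ln$ is the natural logarithm. *)

theory Defs
  imports "HOL-Analysis.Analysis" "HOL-Library.Z2"
begin

text \<open>Vectors of F_2^n are elements of type bit^'n, where n = CARD('n).
  A generator matrix with N nonzero columns is a map g from [N] = {1..N} to bit^'n.\<close>

definition simplex_gen :: "(nat \<Rightarrow> bit ^ 'n) \<Rightarrow> bool" where
  "simplex_gen g \<longleftrightarrow>
     bij_betw g {1..2 ^ CARD('n) - 1} {x :: bit ^ 'n. x \<noteq> 0}"

text \<open>Request i (i < s) is vector v i with multiplicity a i; the recovering sets
  R i j (j < a i) must be pairwise disjoint subsets of [N] summing to v i.\<close>

definition serves :: "nat \<Rightarrow> (nat \<Rightarrow> bit ^ 'n) \<Rightarrow> nat \<Rightarrow> (nat \<Rightarrow> bit ^ 'n) \<Rightarrow> (nat \<Rightarrow> nat) \<Rightarrow> bool" where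
  "serves N g s v a \<longleftrightarrow>
     (\<exists>R :: nat \<Rightarrow> nat \<Rightarrow> nat set.
        (\<forall>i<s. \<forall>j<a i. R i j \<subseteq> {1..N} \<and> (\<Sum>l\<in>R i j. g l) = v i) \<and>
        (\<forall>i<s. \<forall>j<a i. \<forall>i'<s. \<forall>j'<a i'. (i, j) \<noteq> (i', j') \<longrightarrow> R i j \<inter> R i' j' = {}))"

definition functional_batch :: "nat \<Rightarrow> (nat \<Rightarrow> bit ^ 'n) \<Rightarrow> nat \<Rightarrow> nat \<Rightarrow> bool" where
  "functional_batch N g s t \<longleftrightarrow>
     (\<forall>(v :: nat \<Rightarrow> bit ^ 'n) (a :: nat \<Rightarrow> nat).
        (\<forall>i<s. v i \<noteq> 0 \<and> 1 \<le> a i) \<and> (\<Sum>i<s. a i) = t \<longrightarrow> serves N g s v a)"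

end

theory Submission
  imports Defs
begin

text \<open>A recovering set for a request \<open>v\<close> can be read off from any pair \<open>{p, p + v}\<close> of points
  of \<open>\<bbbF>\<^sub>2\<^sup>n\<close>: its nonzero points are columns of the simplex code and sum to \<open>v\<close>. So it suffices
  to place one such pair per request, all pairwise disjoint. Let \<open>W\<close> be the span of the requested
  vectors and \<open>|W| = 2m\<close>. Inside a union of cosets of \<open>W\<close>, the requests of two vectors \<open>u \<noteq> w\<close>
  are packed via the cosets \<open>{h, h + u, h + w, h + u + w}\<close> of \<open>span {u, w}\<close>, each carrying two
  pairs of one direction; so \<open>a + b\<close> such requests fit into any union of cosets of \<open>W\<close> offering
  more than \<open>a + b\<close> pairs, and the smallest such union wastes fewer than \<open>m\<close> pairs. Taking the
  requested vectors two at a time, \<open>t + \<lceil>s/2\<rceil> m \<le> 2\<^sup>n\<^sup>-\<^sup>1\<close> pairs suffice.\<close>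

lemma UNIV_bit: "(UNIV :: bit set) = {0, 1}"
  by (auto intro: bit.exhaust)

instance bit :: finite
  by standard (simp add: UNIV_bit)

lemma CARD_bit [simp]: "CARD(bit) = 2"
  by (simp add: UNIV_bit)

lemma bit_add_self [simp]: "(x::bit) + x = 0"
  by (cases x) auto

lemma vec_bit_add_self [simp]: "(x::bit^'n) + x = 0"
  by (simp add: vec_eq_iff)

lemma vec_bit_add_cancel_left [simp]: "(x::bit^'n) + (x + y) = y"
  by (simp add: vec_eq_iff)

lemma vec_bit_add_cancel_right [simp]: "(y::bit^'n) + x + x = y"
  by (simp add: vec_eq_iff add.assoc)

lemma vec_bit_diff_eq_add: "(x::bit^'n) - y = x + y"
  by (simp add: vec_eq_iff)

lemma nat_ceiling_half: "nat \<lceil>real s / 2\<rceil> = (s + 1) div 2"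
proof -
  have "\<lceil>real s / 2\<rceil> = \<lceil>(of_int (int s) :: real) / of_int 2\<rceil>" by simp
  also have "\<dots> = int ((s + 1) div 2)" unfolding ceiling_divide_eq_div by presburger
  finally show ?thesis by simp
qed

subsection \<open>Subspaces of \<open>\<bbbF>\<^sub>2\<^sup>n\<close>\<close>

lemma card_span_independent:
  "vec.independent (B :: (bit^'n) set) \<Longrightarrow> card (vec.span B) = 2 ^ card B"
proof (induction B rule: infinite_finite_induct)
  case (infinite B)
  then show ?case by simp
next
  case empty
  then show ?case by (simp add: vec.span_empty)
next
  case (insert x B)
  have indep: "vec.independent B" and x: "x \<notin> vec.span B"
    using insert.prems insert.hyps(2) by (auto simp: vec.independent_insert)
  have span_insert: "vec.span (insert x B) = vec.span B \<union> (+) x ` vec.span B"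
  proof
    show "vec.span (insert x B) \<subseteq> vec.span B \<union> (+) x ` vec.span B"
    proof
      fix y assume "y \<in> vec.span (insert x B)"
      then obtain k where k: "y - k *s x \<in> vec.span B" by (auto simp: vec.span_insert)
      show "y \<in> vec.span B \<union> (+) x ` vec.span B"
      proof (cases k)
        case zero
        with k show ?thesis by simp
      next
        case one
        with k have "x + y \<in> vec.span B" by (simp add: vec_bit_diff_eq_add add.commute)
        then show ?thesis by (metis UnI2 image_eqI vec_bit_add_cancel_left)
      qed
    qed
    show "vec.span B \<union> (+) x ` vec.span B \<subseteq> vec.span (insert x B)"
      by (auto intro: vec.span_add vec.span_base vec.span_mono[THEN subsetD, of B])
  qed
  have "vec.span B \<inter> (+) x ` vec.span B = {}"
  proof (rule ccontr)
    assume "vec.span B \<inter> (+) x ` vec.span B \<noteq> {}"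
    then obtain y where "y \<in> vec.span B" "x + y \<in> vec.span B" by auto
    then have "x \<in> vec.span B" using vec.span_add[of "x + y" B y] by simp
    with x show False ..
  qed
  moreover have "card ((+) x ` vec.span B) = card (vec.span B)"
    by (simp add: card_image)
  ultimately have "card (vec.span (insert x B)) = 2 * card (vec.span B)"
    by (simp add: span_insert card_Un_disjoint)
  with insert.IH[OF indep] insert.hyps show ?case by simp
qed

lemma card_subspace_bit:
  assumes "vec.subspace (W :: (bit^'n) set)"
  shows "card W = 2 ^ vec.dim W"
proof -
  obtain B where "B \<subseteq> W" "vec.independent B" "W \<subseteq> vec.span B" "card B = vec.dim W"
    by (rule vec.basis_exists)
  moreover from this have "vec.span B = W"
    using vec.span_minimal[OF _ assms] by blast
  ultimately show ?thesis using card_span_independent by metis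
qed

lemma card_span_pair_bit:
  assumes "u \<noteq> 0" "w \<noteq> 0" "u \<noteq> (w :: bit^'n)"
  shows "card (vec.span {u, w}) = 4"
proof -
  have "u \<notin> vec.span {w}"
  proof
    assume "u \<in> vec.span {w}"
    then obtain k where "u = k *s w" by (auto simp: vec.span_singleton)
    with assms show False by (cases k) auto
  qed
  then have "vec.independent {u, w}"
    using assms(2) by (intro vec.independent_insertI) (auto simp: vec.independent_insert vec.independent_empty)
  then show ?thesis
    using card_span_independent assms(3) by fastforce
qed

definition translation_closed :: "'a::plus set \<Rightarrow> 'a set \<Rightarrow> bool" where
  "translation_closed U S \<longleftrightarrow> (\<forall>x\<in>S. \<forall>u\<in>U. x + u \<in> S)"

lemma translation_closed_subset:
  "translation_closed U S \<Longrightarrow> U' \<subseteq> U \<Longrightarrow> translation_closed U' S"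
  unfolding translation_closed_def by blast

lemma translation_closed_Un:
  "translation_closed U S \<Longrightarrow> translation_closed U T \<Longrightarrow> translation_closed U (S \<union> T)"
  unfolding translation_closed_def by blast

lemma translation_closed_Diff:
  fixes S T :: "(bit^'n) set"
  assumes "translation_closed U S" "translation_closed U T"
  shows "translation_closed U (S - T)"
  using assms unfolding translation_closed_def by (metis Diff_iff vec_bit_add_cancel_right)

lemma translation_closed_coset:
  "vec.subspace U \<Longrightarrow> translation_closed U ((+) x ` U)"
  unfolding translation_closed_def by (auto simp: add.assoc intro!: imageI vec.subspace_add)

lemma translation_closed_span:
  fixes B :: "(bit^'n) set"
  assumes "translation_closed B S"
  shows "translation_closed (vec.span B) S"
proof -
  have "\<forall>x\<in>S. x + u \<in> S" if "u \<in> vec.span B" for u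
    using that
  proof (induction rule: vec.span_induct_alt)
    case base
    show ?case by simp
  next
    case (step c b y)
    show ?case
    proof
      fix x assume "x \<in> S"
      with assms step.hyps have "x + c *s b \<in> S"
        by (cases c) (auto simp: translation_closed_def)
      with step.IH have "x + c *s b + y \<in> S" by blast
      then show "x + (c *s b + y) \<in> S" by (simp add: add.assoc)
    qed
  qed
  then show ?thesis unfolding translation_closed_def by blast
qed

lemma card_dvd_translation_closed:
  fixes S :: "(bit^'n) set"
  assumes U: "vec.subspace U" and "translation_closed U S"
  shows "card U dvd card S"
  using assms(2)
proof (induction "card S" arbitrary: S rule: less_induct)
  case less
  show ?case
  proof (cases "S = {}")
    case False
    then obtain x where x: "x \<in> S" by blast
    let ?C = "(+) x ` U"
    have C: "?C \<subseteq> S" "card ?C = card U"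
      using less.prems x vec.subspace_0[OF U] unfolding translation_closed_def
      by (auto simp: card_image)
    have "card U > 0" using vec.subspace_0[OF U] by (auto simp: card_gt_0_iff)
    have "card U \<le> card S" using C card_mono[of S ?C] by simp
    have card_Diff: "card (S - ?C) = card S - card U" using C by (simp add: card_Diff_subset)
    with \<open>card U > 0\<close> \<open>card U \<le> card S\<close> have "card (S - ?C) < card S" by linarith
    moreover have "translation_closed U (S - ?C)"
      using less.prems translation_closed_coset[OF U] by (rule translation_closed_Diff)
    ultimately have "card U dvd card S - card U"
      using less.hyps card_Diff by metis
    then have "card U dvd (card S - card U) + card U" by simp
    with \<open>card U \<le> card S\<close> show ?thesis by simp
  qed simp
qed

lemma obtain_translation_closed_subset:
  fixes S :: "(bit^'n) set"
  assumes U: "vec.subspace U" and S: "translation_closed U S" and "j * card U \<le> card S"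
  obtains T where "T \<subseteq> S" "translation_closed U T" "card T = j * card U"
proof -
  have "card U > 0" using vec.subspace_0[OF U] by (auto simp: card_gt_0_iff)
  have "\<exists>T \<subseteq> S. translation_closed U T \<and> card T = j * card U"
    using assms(3)
  proof (induction j)
    case 0
    show ?case by (intro exI[of _ "{}"]) (simp add: translation_closed_def)
  next
    case (Suc j)
    have "j * card U \<le> card S" using Suc.prems by simp
    then obtain T where T: "T \<subseteq> S" "translation_closed U T" "card T = j * card U"
      using Suc.IH by blast
    have "card (S - T) = card S - j * card U" using T by (simp add: card_Diff_subset)
    moreover have "card U + j * card U \<le> card S" using Suc.prems by simp
    ultimately have "card (S - T) \<noteq> 0" using \<open>card U > 0\<close> by linarith
    then obtain x where x: "x \<in> S - T" by (metis card.empty ex_in_conv)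
    let ?C = "(+) x ` U"
    have "?C \<subseteq> S - T"
      using translation_closed_Diff[OF S T(2)] x vec.subspace_0[OF U]
      unfolding translation_closed_def by blast
    then have "T \<inter> ?C = {}" by blast
    then have "card (T \<union> ?C) = card T + card ?C" by (simp add: card_Un_disjoint)
    then have "card (T \<union> ?C) = Suc j * card U" using T(3) by (simp add: card_image)
    moreover have "translation_closed U (T \<union> ?C)"
      using T(2) translation_closed_coset[OF U] by (rule translation_closed_Un)
    moreover have "T \<union> ?C \<subseteq> S" using T(1) \<open>?C \<subseteq> S - T\<close> by blast
    ultimately show ?case by (intro exI[of _ "T \<union> ?C"]) simp
  qed
  with that show ?thesis by blast
qed

subsection \<open>Packing disjoint pairs\<close>

definition packable :: "'k set \<Rightarrow> ('k \<Rightarrow> 'a::plus) \<Rightarrow> 'a set \<Rightarrow> bool" where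
  "packable K V S \<longleftrightarrow>
     (\<exists>p. (\<forall>k\<in>K. {p k, p k + V k} \<subseteq> S) \<and> disjoint_family_on (\<lambda>k. {p k, p k + V k}) K)"

lemma packable_empty [simp]: "packable {} V S"
  by (simp add: packable_def disjoint_family_on_def)

lemma packable_Un:
  assumes "packable K V S" "packable L V T" "K \<inter> L = {}" "S \<inter> T = {}"
  shows "packable (K \<union> L) V (S \<union> T)"
proof -
  from assms obtain p q where
    p: "\<forall>k\<in>K. {p k, p k + V k} \<subseteq> S" "disjoint_family_on (\<lambda>k. {p k, p k + V k}) K" and
    q: "\<forall>k\<in>L. {q k, q k + V k} \<subseteq> T" "disjoint_family_on (\<lambda>k. {q k, q k + V k}) L"
    unfolding packable_def by blast
  define r where "r k = (if k \<in> K then p k else q k)" for k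
  have pair_r: "{r k, r k + V k} \<subseteq> (if k \<in> K then S else T)" if "k \<in> K \<union> L" for k
    using that p(1) q(1) by (auto simp: r_def)
  then have "\<forall>k\<in>K \<union> L. {r k, r k + V k} \<subseteq> S \<union> T"
    by (metis (full_types) le_supI1 le_supI2)
  moreover have "disjoint_family_on (\<lambda>k. {r k, r k + V k}) (K \<union> L)"
    unfolding disjoint_family_on_def
  proof (intro ballI impI)
    fix k l assume kl: "k \<in> K \<union> L" "l \<in> K \<union> L" "k \<noteq> l"
    consider "k \<in> K" "l \<in> K" | "k \<in> L" "l \<in> L" | "k \<in> K" "l \<in> L" | "k \<in> L" "l \<in> K"
      using kl by blast
    then show "{r k, r k + V k} \<inter> {r l, r l + V l} = {}"
    proof cases
      case 1
      with p(2) kl(3) show ?thesis by (simp add: r_def disjoint_family_on_def)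
    next
      case 2
      with q(2) kl(3) assms(3) show ?thesis by (auto simp: r_def disjoint_family_on_def)
    qed (use kl pair_r[of k] pair_r[of l] assms(3,4) in \<open>auto split: if_splits\<close>)
  qed
  ultimately show ?thesis unfolding packable_def by blast
qed

lemma packable_single_direction:
  fixes u :: "bit^'n"
  assumes u: "u \<noteq> 0" and S: "translation_closed {u} S"
    and V: "\<forall>k\<in>K. V k = u" and K: "finite K" "2 * card K \<le> card S"
  shows "packable K V S"
proof -
  obtain c where c: "u $ c = 1" using u by (auto simp: vec_eq_iff)
  define H where "H = {y \<in> S. y $ c = 0}"
  text \<open>Translation by \<open>u\<close> swaps \<open>H\<close> with the rest of \<open>S\<close>.\<close>
  have "S = H \<union> (+) u ` H"
  proof
    show "S \<subseteq> H \<union> (+) u ` H"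
    proof
      fix y assume "y \<in> S"
      with S c have "y $ c = 1 \<Longrightarrow> u + y \<in> H"
        by (auto simp: H_def translation_closed_def add.commute)
      with \<open>y \<in> S\<close> show "y \<in> H \<union> (+) u ` H"
        by (cases "y $ c") (auto simp: H_def intro: image_eqI[of y _ "u + y"])
    qed
    show "H \<union> (+) u ` H \<subseteq> S"
      using S by (auto simp: H_def translation_closed_def add.commute)
  qed
  moreover have "H \<inter> (+) u ` H = {}" using c by (auto simp: H_def)
  moreover have "card ((+) u ` H) = card H" by (simp add: card_image)
  ultimately have "card S = 2 * card H" by (simp add: card_Un_disjoint)
  with K obtain f where f: "f ` K \<subseteq> H" "inj_on f K"
    using card_le_inj[OF K(1), of H] by auto
  have "\<forall>k\<in>K. {f k, f k + V k} \<subseteq> S"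
    using f(1) S V by (auto simp: H_def translation_closed_def)
  moreover have "disjoint_family_on (\<lambda>k. {f k, f k + V k}) K"
    unfolding disjoint_family_on_def
  proof (intro ballI impI)
    fix k k' assume k: "k \<in> K" "k' \<in> K" "k \<noteq> k'"
    then have "f k \<noteq> f k'" "(f k) $ c = 0" "(f k') $ c = 0"
      using f by (auto simp: H_def inj_on_def)
    with c have "f k \<noteq> f k' + u" "f k + u \<noteq> f k'"
      by (auto simp: vec_eq_iff)
    with \<open>f k \<noteq> f k'\<close> V k show "{f k, f k + V k} \<inter> {f k', f k' + V k'} = {}"
      by auto
  qed
  ultimately show ?thesis unfolding packable_def by blast
qed

lemma packable_two_directions:
  fixes u w :: "bit^'n"
  assumes uw: "u \<noteq> 0" "w \<noteq> 0" and S: "translation_closed {u, w} S"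
    and V: "\<forall>k\<in>Ka. V k = u" "\<forall>k\<in>Kb. V k = w"
    and K: "finite Ka" "finite Kb" "Ka \<inter> Kb = {}" "2 * (card Ka + card Kb) < card S"
  shows "packable (Ka \<union> Kb) V S"
proof (cases "u = w")
  case True
  with S V K uw show ?thesis
    by (intro packable_single_direction) (auto simp: card_Un_disjoint)
next
  case False
  text \<open>Each coset of \<open>U\<close> in \<open>S\<close> holds two pairs in direction \<open>u\<close> or two in direction \<open>w\<close>.\<close>
  define U where "U = vec.span {u, w}"
  have U: "vec.subspace U" "card U = 4" "u \<in> U" "w \<in> U"
    using card_span_pair_bit[OF uw False] by (auto simp: U_def vec.span_base)
  have SU: "translation_closed U S"
    unfolding U_def using S by (rule translation_closed_span)
  define ca cb where "ca = (card Ka + 1) div 2" and "cb = (card Kb + 1) div 2"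
  have half: "2 * card Ka \<le> ca * 4" "2 * card Kb \<le> cb * 4"
    unfolding ca_def cb_def by presburger+
  obtain q where "card S = 4 * q"
    using card_dvd_translation_closed[OF U(1) SU] U(2) by (auto elim: dvdE)
  with K(4) have "ca * 4 + cb * 4 \<le> card S" unfolding ca_def cb_def by presburger
  then obtain Sa where Sa: "Sa \<subseteq> S" "translation_closed U Sa" "card Sa = ca * card U"
    using obtain_translation_closed_subset[OF U(1) SU, of ca] U(2) by auto
  have "translation_closed {u} Sa" "translation_closed {w} (S - Sa)"
    using translation_closed_subset[OF Sa(2), of "{u}"] U(3,4)
      translation_closed_subset[OF translation_closed_Diff[OF SU Sa(2)], of "{w}"] by auto
  moreover have "2 * card Ka \<le> card Sa" "2 * card Kb \<le> card (S - Sa)"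
    using half Sa U(2) \<open>ca * 4 + cb * 4 \<le> card S\<close> by (simp_all add: card_Diff_subset)
  ultimately have "packable Ka V Sa" "packable Kb V (S - Sa)"
    using uw V K(1,2) by (simp_all add: packable_single_direction)
  then have "packable (Ka \<union> Kb) V (Sa \<union> (S - Sa))"
    using K(3) by (intro packable_Un) auto
  with Sa(1) show ?thesis by (simp add: Un_absorb1)
qed

lemma obtain_packing_in_cosets:
  fixes u w :: "bit^'n"
  assumes W: "vec.subspace W" "card W = 2 * m" and uw: "u \<in> W" "w \<in> W" "u \<noteq> 0" "w \<noteq> 0"
    and V: "\<forall>k\<in>Ka. V k = u" "\<forall>k\<in>Kb. V k = w"
    and K: "finite Ka" "finite Kb" "Ka \<inter> Kb = {}"
    and S: "translation_closed W S" "2 * (card Ka + card Kb + m) \<le> card S"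
  obtains S1 where "S1 \<subseteq> S" "translation_closed W S1" "card S1 \<le> 2 * (card Ka + card Kb + m)"
    "packable (Ka \<union> Kb) V S1"
proof -
  have "m \<ge> 1" using W vec.subspace_0[of W] card_gt_0_iff[of W] by auto
  define A where "A = card Ka + card Kb"
  define k where "k = A div m + 1"
  have "A div m * m + A mod m = A" "A mod m < m" "k * m = A div m * m + m"
    using \<open>m \<ge> 1\<close> by (simp_all add: k_def)
  then have "A < k * m" "k * m \<le> A + m" by linarith+
  with S(2) W(2) have "k * card W \<le> card S" by (simp add: A_def)
  then obtain S1 where S1: "S1 \<subseteq> S" "translation_closed W S1" "card S1 = k * card W"
    using obtain_translation_closed_subset[OF W(1) S(1)] by blast
  have "translation_closed {u, w} S1"
    by (rule translation_closed_subset[OF S1(2)]) (use uw in auto)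
  then have "packable (Ka \<union> Kb) V S1"
    using uw V K S1(3) W(2) \<open>A < k * m\<close> by (intro packable_two_directions) (auto simp: A_def)
  moreover have "card S1 \<le> 2 * (card Ka + card Kb + m)"
    using S1(3) W(2) \<open>k * m \<le> A + m\<close> by (simp add: A_def)
  ultimately show ?thesis using that S1(1,2) by blast
qed

text \<open>The requested vectors are handled two at a time, from the last ones downwards.\<close>

lemma packable_requests:
  fixes v :: "nat \<Rightarrow> bit^'n"
  assumes W: "vec.subspace W" "card W = 2 * m" and v: "\<forall>i<s. v i \<in> W \<and> v i \<noteq> 0"
    and S: "translation_closed W S" "2 * ((\<Sum>i<s. a i) + (s + 1) div 2 * m) \<le> card S"
  shows "packable {(i, j). i < s \<and> j < a i} (\<lambda>k. v (fst k)) S"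
  using v S
proof (induction s arbitrary: S rule: less_induct)
  case (less s)
  have "s = 0 \<or> s = 1 \<or> s = (s - 2) + 2" by arith
  then consider "s = 0" | "s = 1" | r where "s = r + 2" by blast
  then show ?case
  proof cases
    case 1
    then show ?thesis by simp
  next
    case 2
    then have "{(i, j). i < s \<and> j < a i} = {0} \<times> {..<a 0}" by auto
    moreover have "translation_closed {v 0} S"
      by (rule translation_closed_subset[OF less.prems(2)]) (use 2 less.prems(1) in auto)
    ultimately show ?thesis
      using 2 less.prems
      by (simp, intro packable_single_direction[of "v 0"]) (auto simp: card_cartesian_product)
  next
    case 3
    define Ka Kb where "Ka = {r} \<times> {..<a r}" and "Kb = {r + 1} \<times> {..<a (r + 1)}"
    have card_K: "card Ka + card Kb = a r + a (r + 1)"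
      by (simp add: Ka_def Kb_def card_cartesian_product)
    have sum: "(\<Sum>i<s. a i) = (\<Sum>i<r. a i) + (card Ka + card Kb)"
      and half: "(s + 1) div 2 = (r + 1) div 2 + 1"
      using 3 card_K by simp_all
    have room: "2 * (card Ka + card Kb + m) \<le> card S"
      using less.prems(3) unfolding sum half by simp
    obtain S1 where S1: "S1 \<subseteq> S" "translation_closed W S1"
      "card S1 \<le> 2 * (card Ka + card Kb + m)" "packable (Ka \<union> Kb) (\<lambda>k. v (fst k)) S1"
      by (rule obtain_packing_in_cosets[OF W, where u = "v r" and w = "v (r + 1)" and Ka = Ka
            and Kb = Kb and V = "\<lambda>k. v (fst k)" and S = S])
        (use 3 less.prems(1,2) room in \<open>auto simp: Ka_def Kb_def\<close>)
    have "packable {(i, j). i < r \<and> j < a i} (\<lambda>k. v (fst k)) (S - S1)"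
    proof (rule less.IH)
      show "2 * ((\<Sum>i<r. a i) + (r + 1) div 2 * m) \<le> card (S - S1)"
        using less.prems(3) S1(1,3) unfolding sum half by (simp add: card_Diff_subset)
    qed (use 3 less.prems(1) translation_closed_Diff[OF less.prems(2) S1(2)] in auto)
    with S1(4) have "packable ((Ka \<union> Kb) \<union> {(i, j). i < r \<and> j < a i}) (\<lambda>k. v (fst k))
        (S1 \<union> (S - S1))"
      by (rule packable_Un) (auto simp: Ka_def Kb_def)
    moreover have "(Ka \<union> Kb) \<union> {(i, j). i < r \<and> j < a i} = {(i, j). i < s \<and> j < a i}"
      unfolding Ka_def Kb_def 3 by (auto simp: less_Suc_eq)
    ultimately show ?thesis using S1(1) by (simp add: Un_absorb1)
  qed
qed

subsection \<open>Serving requests with the simplex code\<close>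

lemma sum_pair_minus_zero:
  fixes p v :: "bit^'n"
  assumes "v \<noteq> 0"
  shows "\<Sum>({p, p + v} - {0}) = v"
proof -
  consider "p = 0" | "p = v" | "p \<noteq> 0" "p \<noteq> v" by blast
  then show ?thesis
  proof cases
    case 3
    then have "p + v \<noteq> 0" "p \<noteq> p + v"
      using assms by (metis vec_bit_add_cancel_right add_0_left, metis add_0_right add_left_cancel)
    with 3 show ?thesis by (simp add: insert_Diff_if)
  qed (use assms in \<open>auto simp: insert_Diff_if\<close>)
qed

lemma serves_if_packable:
  fixes g :: "nat \<Rightarrow> bit^'n"
  assumes g: "simplex_gen g" and v: "\<forall>i<s. v i \<noteq> 0"
    and "packable {(i, j). i < s \<and> j < a i} (\<lambda>k. v (fst k)) UNIV"
  shows "serves (2 ^ CARD('n) - 1) g s v a"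
proof -
  let ?N = "2 ^ CARD('n) - 1 :: nat"
  from assms(3) obtain p where
    p: "disjoint_family_on (\<lambda>k. {p k, p k + v (fst k)}) {(i, j). i < s \<and> j < a i}"
    unfolding packable_def by blast
  have bij: "bij_betw g {1..?N} {x. x \<noteq> 0}" using g unfolding simplex_gen_def .
  define R where "R i j = {1..?N} \<inter> g -` {p (i, j), p (i, j) + v i}" for i j
  have "R i j \<subseteq> {1..?N} \<and> (\<Sum>l\<in>R i j. g l) = v i" if "i < s" for i j
  proof
    show "R i j \<subseteq> {1..?N}" by (simp add: R_def)
    have "g ` R i j = g ` {1..?N} \<inter> {p (i, j), p (i, j) + v i}"
      unfolding R_def by blast
    also have "\<dots> = {p (i, j), p (i, j) + v i} - {0}"
      using bij unfolding bij_betw_def by blast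
    finally have image_R: "g ` R i j = {p (i, j), p (i, j) + v i} - {0}" .
    have "bij_betw g (R i j) ({p (i, j), p (i, j) + v i} - {0})"
      by (rule bij_betw_subset[OF bij _ image_R]) (simp add: R_def)
    then have "(\<Sum>l\<in>R i j. g l) = \<Sum>({p (i, j), p (i, j) + v i} - {0})"
      using sum.reindex_bij_betw[of g _ _ "\<lambda>x. x"] by simp
    also have "\<dots> = v i" using v that by (simp add: sum_pair_minus_zero)
    finally show "(\<Sum>l\<in>R i j. g l) = v i" .
  qed
  moreover have "R i j \<inter> R i' j' = {}"
    if "i < s" "j < a i" "i' < s" "j' < a i'" "(i, j) \<noteq> (i', j')" for i j i' j'
  proof -
    have "{p (i, j), p (i, j) + v i} \<inter> {p (i', j'), p (i', j') + v i'} = {}"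
      using disjoint_family_onD[OF p, of "(i, j)" "(i', j')"] that by simp
    then show ?thesis unfolding R_def by blast
  qed
  ultimately show ?thesis unfolding serves_def by blast
qed

lemma simplex_serves:
  fixes g :: "nat \<Rightarrow> bit^'n"
  assumes g: "simplex_gen g" and "0 < s" and v: "\<forall>i<s. v i \<noteq> 0 \<and> 1 \<le> a i"
    and t: "(\<Sum>i<s. a i) \<le> 2 ^ (CARD('n) - 1)
              - nat \<lceil>real s / 2\<rceil> * 2 ^ (vec.dim (vec.span (v ` {..<s})) - 1)"
  shows "serves (2 ^ CARD('n) - 1) g s v a"
proof -
  define W where "W = vec.span (v ` {..<s})"
  define m where "m = (2::nat) ^ (vec.dim W - 1)"
  have W: "vec.subspace W" "card W = 2 ^ vec.dim W"
    unfolding W_def by (simp_all add: vec.subspace_span card_subspace_bit)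
  have vW: "\<forall>i<s. v i \<in> W \<and> v i \<noteq> 0"
    using v by (auto simp: W_def intro: vec.span_base)
  with \<open>0 < s\<close> have "{0, v 0} \<subseteq> W" "card {0, v 0} = 2"
    using vec.subspace_0[OF W(1)] by auto
  then have "2 \<le> card W" using card_mono[of W "{0, v 0}"] by simp
  then have "card W = 2 * m" using W(2) unfolding m_def by (cases "vec.dim W") auto
  have "CARD('n) \<noteq> 0" by simp
  then have "card (UNIV :: (bit^'n) set) = 2 * 2 ^ (CARD('n) - 1)"
    by (cases "CARD('n)") simp_all
  moreover have "1 \<le> (\<Sum>i<s. a i)"
    using \<open>0 < s\<close> v member_le_sum[of 0 "{..<s}" a] by fastforce
  moreover have budget: "x + z \<le> y" if "1 \<le> x" "x \<le> y - z" for x y z :: nat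
    using that by arith
  ultimately have "2 * ((\<Sum>i<s. a i) + (s + 1) div 2 * m) \<le> card (UNIV :: (bit^'n) set)"
    using t unfolding nat_ceiling_half W_def[symmetric] m_def[symmetric] by simp
  then have "packable {(i, j). i < s \<and> j < a i} (\<lambda>k. v (fst k)) UNIV"
    using W(1) \<open>card W = 2 * m\<close> vW by (intro packable_requests) (auto simp: translation_closed_def)
  with g v show ?thesis by (intro serves_if_packable) auto
qed

lemma dim_span_image_le:
  "vec.dim (vec.span ((v :: nat \<Rightarrow> bit^'n) ` {..<s})) \<le> s"
proof -
  have "vec.dim (vec.span (v ` {..<s})) \<le> card (v ` {..<s})"
    by (simp add: vec.dim_span vec.dim_le_card')
  also have "\<dots> \<le> s" using card_image_le[of "{..<s}" v] by simp
  finally show ?thesis .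
qed

theorem mainTheorem11:
  fixes g :: "nat \<Rightarrow> bit ^ 'n"
  assumes "simplex_gen g"
  shows "\<forall>s :: nat. 1 \<le> s \<and> real s \<le> real CARD('n) - ln (real CARD('n)) \<longrightarrow>
     functional_batch (2 ^ CARD('n) - 1) g s
        (2 ^ (CARD('n) - 1) - nat \<lceil>real s / 2\<rceil> * 2 ^ (s - 1))
   \<and> (\<forall>(v :: nat \<Rightarrow> bit ^ 'n) (a :: nat \<Rightarrow> nat) t s'.
        (\<forall>i<s. v i \<noteq> 0 \<and> 1 \<le> a i) \<and> (\<Sum>i<s. a i) = t \<and>
        vec.dim (vec.span (v ` {..<s})) = s' \<and>
        t \<le> 2 ^ (CARD('n) - 1) - nat \<lceil>real s / 2\<rceil> * 2 ^ (s' - 1)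
        \<longrightarrow> serves (2 ^ CARD('n) - 1) g s v a)"
proof (intro allI impI, rule conjI)
  fix s :: nat
  assume "1 \<le> s \<and> real s \<le> real CARD('n) - ln (real CARD('n))"
  then have s: "0 < s"
    by simp
  show "functional_batch (2 ^ CARD('n) - 1) g s
          (2 ^ (CARD('n) - 1) - nat \<lceil>real s / 2\<rceil> * 2 ^ (s - 1))"
    unfolding functional_batch_def
  proof (intro allI impI, elim conjE)
    fix v :: "nat \<Rightarrow> bit ^ 'n" and a
    assume v: "\<forall>i<s. v i \<noteq> 0 \<and> 1 \<le> a i"
      and t: "(\<Sum>i<s. a i) = 2 ^ (CARD('n) - 1) - nat \<lceil>real s / 2\<rceil> * 2 ^ (s - 1)"
    have "(2::nat) ^ (vec.dim (vec.span (v ` {..<s})) - 1) \<le> 2 ^ (s - 1)"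
      using dim_span_image_le by (intro power_increasing) (auto intro: diff_le_mono)
    with t have "(\<Sum>i<s. a i) \<le> 2 ^ (CARD('n) - 1)
        - nat \<lceil>real s / 2\<rceil> * 2 ^ (vec.dim (vec.span (v ` {..<s})) - 1)"
      by (simp add: diff_le_mono2)
    with assms s v show "serves (2 ^ CARD('n) - 1) g s v a" by (rule simplex_serves)
  qed
  show "\<forall>(v :: nat \<Rightarrow> bit ^ 'n) (a :: nat \<Rightarrow> nat) t s'.
          (\<forall>i<s. v i \<noteq> 0 \<and> 1 \<le> a i) \<and> (\<Sum>i<s. a i) = t \<and>
          vec.dim (vec.span (v ` {..<s})) = s' \<and>
          t \<le> 2 ^ (CARD('n) - 1) - nat \<lceil>real s / 2\<rceil> * 2 ^ (s' - 1)
          \<longrightarrow> serves (2 ^ CARD('n) - 1) g s v a"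
    using simplex_serves[OF assms s] by blast
qed

end
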